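(* Let $\Lambda\subset\mathbb{Z}^n$ be an antichain lattice and $A\subset\mathbb{Z}^n$ a generic $\Lambda$-finite set. Then the algebraic Scarf complex $\mathcal{F}_{N(A)}$ is isomorphic to a subcomplex of the hull complex $\mathrm{hull}(A)$; that is, for all sufficiently large $t$, for every $\sigma\in N(A)$ the set $\mathrm{conv}(E_t(\sigma))$ is a face of $\mathcal{P}_t(A)$, and $\sigma\mapsto E_t(\sigma)$ identifies $N(A)$ (with labels $\vee\sigma$) with a labeled subcomplex of $\mathrm{hull}(A)$.
   Context: Notation: $\le$, $\ll$, $\vee$ componentwise on $\mathbb{Z}^n$; antichain lattice = subgroup of $\mathbb{Z}^n$ whose distinct elements are pairwise incomparable. $T_\eta=\eta-\mathbb{N}^n$, $T^o_\eta=\{\beta:\beta\ll\eta\}$; the $X$-face ($\emptyset\neq X\subseteq[n]$) of $T_\eta$ is $\{\alpha\in T_\eta:\alpha_i=\eta_i\ \forall i\in X\}$. $A$ is generic if whenever $T^o_\eta\cap A=\emptyset$, each face of $T_\eta$ contains at most one point of $A$. $A$ is $\Lambda$-finite if $A=A+\Lambda$ and $A=A_0+\Lambda$ for a finite $A_0$. A finite nonempty $B\subseteq A$ is strongly neighborly if $B'\subseteq A$, $\vee B'=\vee B$ imply $B'=B$; $N(A)$ is the simplicial complex of strongly neighborly sets, each face $\sigma$ labeled by $\vee\sigma$. The algebraic Scarf complex $\mathcal{F}_{N(A)}$: free $S=k[x_1,\dots,x_n]$-modules with bases $\{e_\sigma:\sigma\in N(A),|\sigma|=i+1\}$ and differential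 $e_\sigma\mapsto\sum_j(-1)^jX^{\vee\sigma-\vee\partial_j\sigma}e_{\partial_j\sigma}$. For real $t>1$ and $\alpha\in\mathbb{Z}^n$, $E_t(\alpha)=(t^{\alpha_1},\dots,t^{\alpha_n})$, $E_t(F)=\{E_t(\alpha):\alpha\in F\}$, $\mathcal{P}_t(A)=\mathbb{R}^n_{\ge0}+\mathrm{conv}(E_t(A))$. $\mathrm{hull}_t(A)$ is the collection of $F\subseteq A$ such that $\mathrm{conv}(E_t(F))$ is a face of $\mathcal{P}_t(A)$ (labeled by $\vee F$); for generic $A$ this is independent of $t$ for $t$ large, and $\mathrm{hull}(A)$ denotes this stable complex. *)

theory Defs
  imports "HOL-Analysis.Analysis"
begin

text \<open>Points of Z^n are modelled as int ^ 'n (n = CARD('n)).\<close>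

definition cle :: "int ^ 'n \<Rightarrow> int ^ 'n \<Rightarrow> bool" where
  "cle a b \<longleftrightarrow> (\<forall>i. a $ i \<le> b $ i)"

definition cll :: "int ^ 'n \<Rightarrow> int ^ 'n \<Rightarrow> bool" where
  "cll a b \<longleftrightarrow> (\<forall>i. a $ i < b $ i)"

definition vee :: "(int ^ 'n) set \<Rightarrow> int ^ 'n" where
  "vee B = (\<chi> i. Max ((\<lambda>b. b $ i) ` B))"

definition antichain_lattice :: "(int ^ 'n) set \<Rightarrow> bool" where
  "antichain_lattice L \<longleftrightarrow>
     0 \<in> L \<and> (\<forall>a\<in>L. \<forall>b\<in>L. a + b \<in> L) \<and> (\<forall>a\<in>L. - a \<in> L) \<and>
     (\<forall>a\<in>L. \<forall>b\<in>L. a \<noteq> b \<longrightarrow> \<not> cle a b)"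

definition Tcone :: "int ^ 'n \<Rightarrow> (int ^ 'n) set" where
  "Tcone \<eta> = {\<alpha>. cle \<alpha> \<eta>}"

definition Topen :: "int ^ 'n \<Rightarrow> (int ^ 'n) set" where
  "Topen \<eta> = {\<beta>. cll \<beta> \<eta>}"

definition Tface :: "int ^ 'n \<Rightarrow> 'n set \<Rightarrow> (int ^ 'n) set" where
  "Tface \<eta> X = {\<alpha> \<in> Tcone \<eta>. \<forall>i\<in>X. \<alpha> $ i = \<eta> $ i}"

definition generic :: "(int ^ 'n) set \<Rightarrow> bool" where
  "generic A \<longleftrightarrow> (\<forall>\<eta>. Topen \<eta> \<inter> A = {} \<longrightarrow>
      (\<forall>X. X \<noteq> {} \<longrightarrow> (\<forall>a\<in>Tface \<eta> X \<inter> A. \<forall>b\<in>Tface \<eta> X \<inter> A. a = b)))"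

definition lattice_finite :: "(int ^ 'n) set \<Rightarrow> (int ^ 'n) set \<Rightarrow> bool" where
  "lattice_finite L A \<longleftrightarrow>
     A = {a + l | a l. a \<in> A \<and> l \<in> L} \<and>
     (\<exists>A0. finite A0 \<and> A = {a + l | a l. a \<in> A0 \<and> l \<in> L})"

definition strongly_neighborly :: "(int ^ 'n) set \<Rightarrow> (int ^ 'n) set \<Rightarrow> bool" where
  "strongly_neighborly A B \<longleftrightarrow> finite B \<and> B \<noteq> {} \<and> B \<subseteq> A \<and>
     (\<forall>B'. finite B' \<and> B' \<noteq> {} \<and> B' \<subseteq> A \<and> vee B' = vee B \<longrightarrow> B' = B)"

definition NA :: "(int ^ 'n) set \<Rightarrow> (int ^ 'n) set set" where
  "NA A = {B. strongly_neighborly A B}"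

definition Et :: "real \<Rightarrow> int ^ 'n \<Rightarrow> real ^ 'n" where
  "Et t \<alpha> = (\<chi> i. t powr (real_of_int (\<alpha> $ i)))"

definition Pt :: "real \<Rightarrow> (int ^ 'n) set \<Rightarrow> (real ^ 'n) set" where
  "Pt t A = {x + y | x y. (\<forall>i. 0 \<le> x $ i) \<and> y \<in> convex hull (Et t ` A)}"

definition hull_t :: "real \<Rightarrow> (int ^ 'n) set \<Rightarrow> (int ^ 'n) set set" where
  "hull_t t A = {F. F \<subseteq> A \<and> (convex hull (Et t ` F)) face_of (Pt t A)}"

end

theory Submission
  imports Defs
begin

text \<open>
  Let \<open>\<sigma>\<close> be strongly neighborly with join \<open>\<eta>\<close>. Every member of \<open>\<sigma>\<close> attains \<open>\<eta>\<close> in some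
  coordinate, no point of \<open>A\<close> outside \<open>\<sigma>\<close> lies below \<open>\<eta>\<close>, and by genericity distinct members
  attain \<open>\<eta>\<close> in distinct coordinates. After rescaling coordinate \<open>k\<close> by \<open>t powr -\<eta>\<^sub>k\<close>, asking that
  \<open>w \<bullet> E\<^sub>t(a) = 1\<close> for all \<open>a \<in> \<sigma>\<close> is a linear system which for large \<open>t\<close> is a small perturbation
  of the identity, so it has a solution with positive entries bounded below by \<open>1/t\<close>. A point of
  \<open>A\<close> exceeding \<open>\<eta>\<close> in some coordinate gains a factor \<open>t\<close> there and lands strictly above the
  hyperplane \<open>w \<bullet> x = 1\<close>. Since \<open>w\<close> is positive, this hyperplane supports the orthant-plus-hull
  \<open>P\<^sub>t(A)\<close> exactly in \<open>conv E\<^sub>t(\<sigma>)\<close>.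
\<close>

lemma strongly_neighborly_le_vee:
  assumes "strongly_neighborly A \<sigma>" and "a \<in> \<sigma>"
  shows "cle a (vee \<sigma>)"
  using assms by (auto simp: strongly_neighborly_def cle_def vee_def)

lemma strongly_neighborly_mem_if_le_vee:
  assumes sn: "strongly_neighborly A \<sigma>" and "b \<in> A" and "cle b (vee \<sigma>)"
  shows "b \<in> \<sigma>"
proof -
  have \<sigma>: "finite \<sigma>" "\<sigma> \<noteq> {}" "\<sigma> \<subseteq> A"
    using sn by (auto simp: strongly_neighborly_def)
  have "vee (insert b \<sigma>) $ i = vee \<sigma> $ i" for i
    using \<sigma> \<open>cle b (vee \<sigma>)\<close> by (simp add: vee_def cle_def max_def)
  then have "insert b \<sigma> = \<sigma>"
    using sn \<sigma> \<open>b \<in> A\<close> unfolding strongly_neighborly_def by (simp add: vec_eq_iff)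
  then show ?thesis by blast
qed

lemma strongly_neighborly_touches_vee:
  assumes sn: "strongly_neighborly A \<sigma>" and a: "a \<in> \<sigma>"
  shows "\<exists>i. a $ i = vee \<sigma> $ i"
proof (rule ccontr)
  assume "\<not> ?thesis"
  then have lt: "a $ i < vee \<sigma> $ i" for i
    using strongly_neighborly_le_vee[OF sn a] by (force simp: cle_def order_le_less)
  have \<sigma>: "finite \<sigma>" "\<sigma> \<subseteq> A" using sn by (auto simp: strongly_neighborly_def)
  have attained: "\<exists>b\<in>\<sigma> - {a}. b $ i = vee \<sigma> $ i" for i
  proof -
    have "vee \<sigma> $ i \<in> (\<lambda>b. b $ i) ` \<sigma>"
      unfolding vee_def using \<sigma> a by (auto intro: Max_in)
    then show ?thesis using lt[of i] by force
  qed
  then have ne: "\<sigma> - {a} \<noteq> {}" by blast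
  have "vee (\<sigma> - {a}) = vee \<sigma>"
  proof (rule vec_eq_iff[THEN iffD2, rule_format])
    fix i
    obtain b where b: "b \<in> \<sigma> - {a}" "b $ i = vee \<sigma> $ i" using attained by blast
    have "vee (\<sigma> - {a}) $ i \<le> vee \<sigma> $ i"
      unfolding vee_def using \<sigma> ne by (auto intro: Max_mono)
    moreover have "b $ i \<le> vee (\<sigma> - {a}) $ i"
      unfolding vee_def using \<sigma> b(1) by (auto intro: Max_ge)
    ultimately show "vee (\<sigma> - {a}) $ i = vee \<sigma> $ i" using b by simp
  qed
  then have "\<sigma> - {a} = \<sigma>"
    using sn \<sigma> ne unfolding strongly_neighborly_def by (meson Diff_subset finite_Diff subset_trans)
  with a show False by blast
qed

lemma generic_touch_unique:
  assumes gen: "generic A" and sn: "strongly_neighborly A \<sigma>"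
    and "a \<in> \<sigma>" "b \<in> \<sigma>" and "a $ i = vee \<sigma> $ i" "b $ i = vee \<sigma> $ i"
  shows "a = b"
proof -
  have "Topen (vee \<sigma>) \<inter> A = {}"
  proof (rule ccontr)
    assume "Topen (vee \<sigma>) \<inter> A \<noteq> {}"
    then obtain c where c: "c \<in> A" "cll c (vee \<sigma>)" by (auto simp: Topen_def)
    then have "c \<in> \<sigma>"
      by (intro strongly_neighborly_mem_if_le_vee[OF sn]) (auto simp: cle_def cll_def less_imp_le)
    then obtain j where "c $ j = vee \<sigma> $ j" using strongly_neighborly_touches_vee[OF sn] by blast
    with c(2) show False unfolding cll_def by (metis less_irrefl)
  qed
  moreover have "a \<in> Tface (vee \<sigma>) {i} \<inter> A" "b \<in> Tface (vee \<sigma>) {i} \<inter> A"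
    using assms strongly_neighborly_le_vee[OF sn]
    by (auto simp: Tface_def Tcone_def strongly_neighborly_def)
  ultimately show ?thesis using gen unfolding generic_def by blast
qed

lemma abs_matrix_vector_component_le:
  fixes M :: "real^'n^'m" and c :: "real^'n"
  assumes "\<And>k. \<bar>c$k\<bar> \<le> B"
  shows "\<bar>(M *v c)$i\<bar> \<le> (\<Sum>k\<in>UNIV. \<bar>M$i$k\<bar>) * B"
proof -
  have "\<bar>(M *v c)$i\<bar> \<le> (\<Sum>k\<in>UNIV. \<bar>M$i$k\<bar> * \<bar>c$k\<bar>)"
    unfolding matrix_vector_mult_def by (simp add: sum_abs[THEN order_trans] abs_mult)
  also have "\<dots> \<le> (\<Sum>k\<in>UNIV. \<bar>M$i$k\<bar> * B)"
    using assms by (intro sum_mono mult_left_mono) auto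
  finally show ?thesis by (simp add: sum_distrib_right)
qed

lemma perturbed_identity_solution_bound:
  fixes M :: "real^'n^'n" and c r :: "real^'n"
  assumes rows: "\<And>i. (\<Sum>k\<in>UNIV. \<bar>M$i$k\<bar>) \<le> \<delta>" and "\<delta> < 1"
    and r: "\<And>i. \<bar>r$i\<bar> \<le> R" and eq: "c + M *v c = r"
  shows "\<bar>c$i\<bar> \<le> R / (1 - \<delta>)"
proof -
  define B where "B = Max (range (\<lambda>k. \<bar>c$k\<bar>))"
  have le_B: "\<bar>c$k\<bar> \<le> B" for k
    unfolding B_def by (rule Max_ge) auto
  have "B \<in> range (\<lambda>k. \<bar>c$k\<bar>)"
    unfolding B_def by (intro Max_in) auto
  then obtain j where j: "\<bar>c$j\<bar> = B" by auto
  have "B \<ge> 0" using j by auto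
  have "\<bar>(M *v c)$j\<bar> \<le> \<delta> * B"
    using abs_matrix_vector_component_le[OF le_B, of M j] rows[of j] \<open>B \<ge> 0\<close>
    by (meson mult_right_mono order_trans)
  moreover have "c$j + (M *v c)$j = r$j" using eq by (simp add: vec_eq_iff)
  ultimately have "B \<le> R + \<delta> * B" using j r[of j] by linarith
  then have "B \<le> R / (1 - \<delta>)" using \<open>\<delta> < 1\<close> by (simp add: field_simps)
  then show ?thesis using le_B[of i] by linarith
qed

lemma perturbed_identity_surj:
  fixes M :: "real^'n^'n"
  assumes "\<And>i. (\<Sum>k\<in>UNIV. \<bar>M$i$k\<bar>) \<le> \<delta>" and "\<delta> < 1"
  shows "\<exists>c. c + M *v c = r"
proof -
  have lin: "linear (\<lambda>c. c + M *v c)"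
    by (intro linear_compose_add linear_id[unfolded id_def] matrix_vector_mul_linear)
  have zero: "c = 0" if "c + M *v c = 0" for c
  proof -
    have "\<bar>c$i\<bar> \<le> 0 / (1 - \<delta>)" for i
      by (rule perturbed_identity_solution_bound[OF assms _ that]) simp
    then show ?thesis by (simp add: vec_eq_iff)
  qed
  have "inj (\<lambda>c. c + M *v c)"
    unfolding linear_injective_0[OF lin] using zero by blast
  then show ?thesis
    using linear_injective_imp_surjective[OF lin] by (metis surjD)
qed

lemma positive_solution_near_identity:
  fixes g :: "'n::finite \<Rightarrow> 'n \<Rightarrow> real" and P :: "'n set"
  assumes diag: "\<And>i. i \<in> P \<Longrightarrow> g i i = 1"
    and nonneg: "\<And>i k. i \<in> P \<Longrightarrow> 0 \<le> g i k"
    and le_1: "\<And>i k. i \<in> P \<Longrightarrow> g i k \<le> 1"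
    and off_diag: "\<And>i k. i \<in> P \<Longrightarrow> k \<in> P \<Longrightarrow> k \<noteq> i \<Longrightarrow> g i k \<le> 1 / t"
    and t: "4 * real CARD('n) + 2 \<le> t"
  shows "\<exists>c::real^'n. (\<forall>k. 1 / t < c$k) \<and> (\<forall>i\<in>P. (\<Sum>k\<in>UNIV. c$k * g i k) = 1)"
proof -
  define N where "N = real CARD('n)"
  have "N \<ge> 1" unfolding N_def by (simp add: Suc_leI)
  with t have "t > 0" and N_t: "4 * N + 1 < t" unfolding N_def by linarith+
  \<comment> \<open>Unknowns outside \<open>P\<close> are frozen at \<open>\<epsilon>\<close> and their contributions moved to the right-hand side.\<close>
  define \<epsilon> where "\<epsilon> = 2 / t"
  define s where "s i = (\<Sum>k\<in>UNIV. if k \<in> P then 0 else g i k)" for i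
  define M :: "real^'n^'n" where
    "M = (\<chi> i k. if i \<in> P \<and> k \<in> P \<and> k \<noteq> i then g i k else 0)"
  define r :: "real^'n" where "r = (\<chi> i. if i \<in> P then 1 - \<epsilon> * s i else \<epsilon>)"
  have rows: "(\<Sum>k\<in>UNIV. \<bar>M$i$k\<bar>) \<le> N / t" for i
  proof -
    have "\<bar>M$i$k\<bar> \<le> 1 / t" for k
      using off_diag nonneg \<open>t > 0\<close> by (simp add: M_def)
    then have "(\<Sum>k\<in>UNIV. \<bar>M$i$k\<bar>) \<le> real (card (UNIV :: 'n set)) * (1 / t)"
      by (intro sum_bounded_above) auto
    then show ?thesis by (simp add: N_def)
  qed
  have s: "0 \<le> s i" "s i \<le> N" if "i \<in> P" for i
  proof -
    show "0 \<le> s i" unfolding s_def using nonneg[OF that] by (intro sum_nonneg) auto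
    have "s i \<le> real (card (UNIV :: 'n set)) * 1"
      unfolding s_def using le_1[OF that] by (intro sum_bounded_above) auto
    then show "s i \<le> N" by (simp add: N_def)
  qed
  have \<epsilon>_s: "\<epsilon> * s i \<le> 2 * (N / t)" if "i \<in> P" for i
    using s[OF that] \<open>t > 0\<close> by (simp add: \<epsilon>_def field_simps)
  have "2 * (N / t) \<le> 1" "N / t \<le> 1 / 2" "N / t < 1" "\<epsilon> \<le> 1" "1 / t < 1 - 4 * (N / t)"
    using N_t \<open>N \<ge> 1\<close> \<open>t > 0\<close> by (simp_all add: \<epsilon>_def field_simps)
  have r_bound: "\<bar>r$i\<bar> \<le> 1" for i
    using \<epsilon>_s[of i] s[of i] \<open>2 * (N / t) \<le> 1\<close> \<open>\<epsilon> \<le> 1\<close> \<open>t > 0\<close>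
    by (auto simp: r_def \<epsilon>_def)
  obtain c where c: "c + M *v c = r"
    using perturbed_identity_surj[OF rows \<open>N / t < 1\<close>] by blast
  have c_bound: "\<bar>c$k\<bar> \<le> 2" for k
  proof -
    have "\<bar>c$k\<bar> \<le> 1 / (1 - N / t)"
      by (rule perturbed_identity_solution_bound[OF rows \<open>N / t < 1\<close> r_bound c])
    also have "\<dots> \<le> 2" using \<open>N / t \<le> 1 / 2\<close> by (auto simp: divide_le_eq)
    finally show ?thesis .
  qed
  have c_eq: "c$i = r$i - (M *v c)$i" for i
    using c by (simp add: vec_eq_iff eq_diff_eq)
  have c_outside: "c$i = \<epsilon>" if "i \<notin> P" for i
    using c_eq[of i] that by (simp add: M_def r_def matrix_vector_mult_def)
  have c_inside: "1 / t < c$i" if "i \<in> P" for i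
  proof -
    have "\<bar>(M *v c)$i\<bar> \<le> (N / t) * 2"
      using abs_matrix_vector_component_le[OF c_bound, of M i] rows[of i]
      by (meson mult_right_mono order_trans zero_le_numeral)
    then have "(M *v c)$i \<le> 2 * (N / t)" by (simp add: abs_le_iff mult.commute)
    moreover have "r$i = 1 - \<epsilon> * s i" using that by (simp add: r_def)
    ultimately show ?thesis
      using c_eq[of i] \<epsilon>_s[OF that] \<open>1 / t < 1 - 4 * (N / t)\<close> by linarith
  qed
  have "1 / t < c$k" for k
  proof (cases "k \<in> P")
    case False
    then show ?thesis using c_outside \<open>t > 0\<close> by (simp add: \<epsilon>_def divide_strict_right_mono)
  qed (rule c_inside)
  moreover have "(\<Sum>k\<in>UNIV. c$k * g i k) = 1" if "i \<in> P" for i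
  proof -
    have "c$k * g i k = (if k = i then c$k else 0) + M$i$k * c$k
        + \<epsilon> * (if k \<in> P then 0 else g i k)" for k
      using that diag c_outside by (auto simp: M_def)
    then have "(\<Sum>k\<in>UNIV. c$k * g i k) = c$i + (M *v c)$i + \<epsilon> * s i"
      by (simp add: sum.distrib sum_distrib_left matrix_vector_mult_def s_def mult.commute)
    also have "\<dots> = r$i + \<epsilon> * s i" using c by (simp add: vec_eq_iff)
    also have "\<dots> = 1" using that by (simp add: r_def)
    finally show ?thesis .
  qed
  ultimately show ?thesis by blast
qed

lemma separating_weight:
  fixes \<sigma> A :: "(int^'n) set" and \<eta> :: "int^'n" and p :: "int^'n \<Rightarrow> 'n"
  assumes le: "\<And>a. a \<in> \<sigma> \<Longrightarrow> cle a \<eta>"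
    and below: "\<And>b. b \<in> A \<Longrightarrow> cle b \<eta> \<Longrightarrow> b \<in> \<sigma>"
    and touch: "\<And>a. a \<in> \<sigma> \<Longrightarrow> a$(p a) = \<eta>$(p a)"
    and unique: "\<And>a b. a \<in> \<sigma> \<Longrightarrow> b \<in> \<sigma> \<Longrightarrow> a$(p b) = \<eta>$(p b) \<Longrightarrow> a = b"
    and t: "4 * real CARD('n) + 2 \<le> t"
  shows "\<exists>w::real^'n. (\<forall>i. 0 < w$i) \<and> (\<forall>a\<in>\<sigma>. w \<bullet> Et t a = 1) \<and> (\<forall>b\<in>A - \<sigma>. 1 < w \<bullet> Et t b)"
proof -
  have "0 \<le> real CARD('n)" by simp
  with t have "1 < t" by linarith
  define e where "e a k = t powr of_int (a$k - \<eta>$k)" for a k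
  have e_le_1: "e a k \<le> 1" if "a \<in> \<sigma>" for a k
  proof -
    have "a$k \<le> \<eta>$k" using le[OF that] by (simp add: cle_def)
    then have "e a k \<le> t powr 0"
      unfolding e_def using \<open>1 < t\<close> by (intro powr_mono) auto
    then show ?thesis using \<open>1 < t\<close> by simp
  qed
  have e_off: "e a (p b) \<le> 1 / t" if "a \<in> \<sigma>" "b \<in> \<sigma>" "a \<noteq> b" for a b
  proof -
    have "a$(p b) \<le> \<eta>$(p b)" "a$(p b) \<noteq> \<eta>$(p b)"
      using le[OF that(1)] unique[OF that(1,2)] that(3) by (auto simp: cle_def)
    then have "a$(p b) \<le> \<eta>$(p b) - 1" by linarith
    then have "e a (p b) \<le> t powr -1"
      unfolding e_def using \<open>1 < t\<close> by (intro powr_mono) auto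
    then show ?thesis using \<open>1 < t\<close> by (simp add: powr_minus_divide)
  qed
  have "inj_on p \<sigma>"
    using touch unique by (metis inj_onI)
  define q where "q = inv_into \<sigma> p"
  have q: "q i \<in> \<sigma>" "p (q i) = i" if "i \<in> p ` \<sigma>" for i
    using that by (auto simp: q_def inv_into_into f_inv_into_f)
  have q_p: "q (p a) = a" if "a \<in> \<sigma>" for a
    using \<open>inj_on p \<sigma>\<close> that by (simp add: q_def)
  obtain c :: "real^'n" where c_gt: "\<And>k. 1 / t < c$k"
    and c_eq: "\<And>i. i \<in> p ` \<sigma> \<Longrightarrow> (\<Sum>k\<in>UNIV. c$k * e (q i) k) = 1"
  proof -
    have "\<exists>c::real^'n. (\<forall>k. 1 / t < c$k) \<and> (\<forall>i\<in>p ` \<sigma>. (\<Sum>k\<in>UNIV. c$k * e (q i) k) = 1)"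
    proof (rule positive_solution_near_identity[OF _ _ _ _ t])
      show "e (q i) i = 1" if "i \<in> p ` \<sigma>" for i
        using touch[OF q(1)[OF that]] q(2)[OF that] \<open>1 < t\<close> by (simp add: e_def)
      show "0 \<le> e (q i) k" for i k by (simp add: e_def)
      show "e (q i) k \<le> 1" if "i \<in> p ` \<sigma>" for i k
        using e_le_1 q(1)[OF that] .
      show "e (q i) k \<le> 1 / t" if "i \<in> p ` \<sigma>" "k \<in> p ` \<sigma>" "k \<noteq> i" for i k
        using e_off[of "q i" "q k"] q[OF that(1)] q[OF that(2)] that(3) by force
    qed
    then show ?thesis using that by blast
  qed
  define w where "w = (\<chi> k. c$k * t powr - of_int (\<eta>$k))"
  have w_Et: "w \<bullet> Et t a = (\<Sum>k\<in>UNIV. c$k * e a k)" for a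
    unfolding w_def Et_def e_def inner_vec_def
    by (simp add: mult.assoc powr_add[symmetric])
  have "0 < 1 / t" using \<open>1 < t\<close> by simp
  then have "0 < c$k" for k
    using c_gt[of k] by linarith
  then have "0 < w$k" for k using \<open>1 < t\<close> by (simp add: w_def)
  moreover have "w \<bullet> Et t a = 1" if "a \<in> \<sigma>" for a
    using c_eq[of "p a"] that by (simp add: w_Et q_p)
  moreover have "1 < w \<bullet> Et t b" if "b \<in> A - \<sigma>" for b
  proof -
    have "\<not> cle b \<eta>" using below that by blast
    then obtain i where "\<eta>$i < b$i" by (auto simp: cle_def not_le)
    then have "t powr 1 \<le> e b i"
      unfolding e_def using \<open>1 < t\<close> by (intro powr_mono) auto
    then have "t \<le> e b i" using \<open>1 < t\<close> by simp
    have "1 = (1 / t) * t" using \<open>1 < t\<close> by simp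
    also have "\<dots> < c$i * t" using c_gt[of i] \<open>1 < t\<close> by (intro mult_strict_right_mono) auto
    also have "\<dots> \<le> c$i * e b i"
      using \<open>t \<le> e b i\<close> \<open>\<And>k. 0 < c$k\<close> by (intro mult_left_mono) (auto simp: less_imp_le)
    also have "\<dots> \<le> (\<Sum>k\<in>UNIV. c$k * e b k)"
      using \<open>\<And>k. 0 < c$k\<close> by (intro member_le_sum) (auto simp: e_def less_imp_le)
    finally show ?thesis by (simp add: w_Et)
  qed
  ultimately show ?thesis by blast
qed

lemma convex_hull_Int_supporting_hyperplane:
  fixes w :: "'a::real_inner"
  assumes "S \<subseteq> T" and on: "\<And>x. x \<in> S \<Longrightarrow> w \<bullet> x = 1"
    and above: "\<And>x. x \<in> T - S \<Longrightarrow> 1 < w \<bullet> x"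
  shows "convex hull T \<inter> {y. w \<bullet> y = 1} = convex hull S"
proof
  have "convex hull S \<subseteq> {y. w \<bullet> y = 1}"
    using on by (intro hull_minimal) (auto simp: convex_hyperplane)
  then show "convex hull S \<subseteq> convex hull T \<inter> {y. w \<bullet> y = 1}"
    using hull_mono[OF \<open>S \<subseteq> T\<close>] by blast
next
  show "convex hull T \<inter> {y. w \<bullet> y = 1} \<subseteq> convex hull S"
  proof
    fix y assume y: "y \<in> convex hull T \<inter> {y. w \<bullet> y = 1}"
    then obtain V u where V: "finite V" "V \<subseteq> T" "\<forall>v\<in>V. 0 \<le> u v" "sum u V = 1"
      "(\<Sum>v\<in>V. u v *\<^sub>R v) = y"
      unfolding convex_hull_explicit by blast
    have "(\<Sum>v\<in>V. u v * (w \<bullet> v - 1)) = (\<Sum>v\<in>V. u v * (w \<bullet> v)) - sum u V"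
      by (simp add: right_diff_distrib sum_subtractf)
    also have "\<dots> = w \<bullet> y - 1"
      using V(4) by (simp add: V(5)[symmetric] inner_sum_right)
    also have "\<dots> = 0" using y by simp
    finally have "\<forall>v\<in>V. u v * (w \<bullet> v - 1) = 0"
      using V(1-3) above on by (subst sum_nonneg_eq_0_iff[symmetric]) force+
    then have zero: "u v = 0" if "v \<in> V - S" for v
      using that V(2) above by fastforce
    have "sum u V = sum u (V \<inter> S)" "(\<Sum>v\<in>V. u v *\<^sub>R v) = (\<Sum>v\<in>V \<inter> S. u v *\<^sub>R v)"
      by (rule sum.mono_neutral_right; use V(1) zero in auto)+
    then have "sum u (V \<inter> S) = 1" "(\<Sum>v\<in>V \<inter> S. u v *\<^sub>R v) = y"
      using V(4,5) by simp_all
    then show "y \<in> convex hull S"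
      unfolding convex_hull_explicit using V(1,3)
      by (intro CollectI exI[of _ "V \<inter> S"] exI[of _ u]) auto
  qed
qed

lemma orthant_plus_convex_hull_face:
  fixes w :: "real^'n" and S T :: "(real^'n) set"
  assumes pos: "\<And>i. 0 < w$i" and "S \<subseteq> T" and on: "\<And>x. x \<in> S \<Longrightarrow> w \<bullet> x = 1"
    and above: "\<And>x. x \<in> T - S \<Longrightarrow> 1 < w \<bullet> x"
  shows "convex hull S face_of {x + y | x y. (\<forall>i. 0 \<le> x$i) \<and> y \<in> convex hull T}"
    (is "_ face_of ?Q")
proof -
  have orthant: "0 \<le> w \<bullet> x" "w \<bullet> x = 0 \<longleftrightarrow> x = 0" if "\<forall>i. 0 \<le> x$i" for x
  proof -
    have nonneg: "0 \<le> w$i * x$i" for i using pos that by (simp add: less_imp_le)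
    then show "0 \<le> w \<bullet> x" unfolding inner_vec_def by (simp add: sum_nonneg)
    have "w$i \<noteq> 0" for i using pos[of i] by simp
    then show "w \<bullet> x = 0 \<longleftrightarrow> x = 0"
      unfolding inner_vec_def using sum_nonneg_eq_0_iff[of UNIV "\<lambda>i. w$i * x$i"] nonneg
      by (simp add: vec_eq_iff)
  qed
  have "1 \<le> w \<bullet> x" if "x \<in> T" for x
    using on[of x] above[of x] that by fastforce
  then have T_above: "convex hull T \<subseteq> {y. 1 \<le> w \<bullet> y}"
    by (intro hull_minimal) (auto simp: convex_halfspace_ge)
  have "?Q = (\<Union>x\<in>{x. \<forall>i. 0 \<le> x$i}. \<Union>y\<in>convex hull T. {x + y})"
    by blast
  moreover have "convex {x::real^'n. \<forall>i. 0 \<le> x$i}"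
    by (rule convex_box_cart) (simp add: atLeast_def[symmetric])
  ultimately have Q_convex: "convex ?Q"
    using convex_sums[OF _ convex_convex_hull] by simp
  have Q_above: "1 \<le> w \<bullet> z" if "z \<in> ?Q" for z
    using that orthant T_above by (force simp: inner_add_right)
  have Q_hyperplane: "?Q \<inter> {z. w \<bullet> z = 1} = convex hull S"
  proof
    show "?Q \<inter> {z. w \<bullet> z = 1} \<subseteq> convex hull S"
    proof
      fix z assume "z \<in> ?Q \<inter> {z. w \<bullet> z = 1}"
      then obtain x y where z: "z = x + y" "\<forall>i. 0 \<le> x$i" "y \<in> convex hull T" "w \<bullet> z = 1"
        by blast
      then have "w \<bullet> x = 0" "w \<bullet> y = 1"
        using orthant(1)[of x] T_above by (auto simp: inner_add_right)
      then have "z = y" "y \<in> convex hull T \<inter> {y. w \<bullet> y = 1}"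
        using z orthant(2) by auto
      then show "z \<in> convex hull S"
        using convex_hull_Int_supporting_hyperplane[OF \<open>S \<subseteq> T\<close> on above] by blast
    qed
    show "convex hull S \<subseteq> ?Q \<inter> {z. w \<bullet> z = 1}"
    proof
      fix y assume "y \<in> convex hull S"
      then have "y \<in> convex hull T \<inter> {y. w \<bullet> y = 1}"
        using convex_hull_Int_supporting_hyperplane[OF \<open>S \<subseteq> T\<close> on above] by blast
      moreover have "y \<in> ?Q" if "y \<in> convex hull T"
        by (intro CollectI exI[of _ 0] exI[of _ y]) (simp add: that)
      ultimately show "y \<in> ?Q \<inter> {z. w \<bullet> z = 1}" by blast
    qed
  qed
  have "?Q \<inter> {z. w \<bullet> z = 1} face_of ?Q"
    by (rule face_of_Int_supporting_hyperplane_ge)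
      (use Q_convex Q_above in \<open>auto intro: convex_Int convex_hyperplane\<close>)
  then show ?thesis by (simp only: Q_hyperplane)
qed

lemma inj_Et:
  assumes "1 < t"
  shows "inj (Et t :: int^'n \<Rightarrow> real^'n)"
proof (rule injI)
  fix a b :: "int^'n" assume "Et t a = Et t b"
  then have "t powr of_int (a$i) = t powr of_int (b$i)" for i
    unfolding Et_def by (metis vec_lambda_beta)
  then show "a = b" using assms by (simp add: vec_eq_iff powr_inj)
qed

lemma strongly_neighborly_face:
  fixes A :: "(int^'n) set"
  assumes gen: "generic A" and "\<sigma> \<in> NA A" and t: "4 * real CARD('n) + 2 \<le> t"
  shows "convex hull (Et t ` \<sigma>) face_of Pt t A \<and> inj_on (Et t) \<sigma> \<and> \<sigma> \<in> hull_t t A"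
proof -
  have sn: "strongly_neighborly A \<sigma>" using \<open>\<sigma> \<in> NA A\<close> by (simp add: NA_def)
  then have "\<sigma> \<subseteq> A" by (simp add: strongly_neighborly_def)
  obtain p where p: "\<And>a. a \<in> \<sigma> \<Longrightarrow> a$(p a) = vee \<sigma> $ (p a)"
    using strongly_neighborly_touches_vee[OF sn] by metis
  obtain w :: "real^'n" where w: "\<And>i. 0 < w$i" "\<And>a. a \<in> \<sigma> \<Longrightarrow> w \<bullet> Et t a = 1"
    "\<And>b. b \<in> A - \<sigma> \<Longrightarrow> 1 < w \<bullet> Et t b"
    using separating_weight[OF strongly_neighborly_le_vee[OF sn]
        strongly_neighborly_mem_if_le_vee[OF sn] p _ t]
      generic_touch_unique[OF gen sn] p by metis
  have face: "convex hull (Et t ` \<sigma>) face_of Pt t A"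
    unfolding Pt_def
    by (rule orthant_plus_convex_hull_face) (use w \<open>\<sigma> \<subseteq> A\<close> in \<open>auto intro!: w(3)\<close>)
  have "0 \<le> real CARD('n)" by simp
  with t have "1 < t" by linarith
  then have "inj_on (Et t) \<sigma>" by (metis inj_Et inj_on_subset subset_UNIV)
  with face \<open>\<sigma> \<subseteq> A\<close> show ?thesis by (simp add: hull_t_def)
qed

theorem mainTheorem2:
  fixes L A :: "(int ^ 'n) set"
  assumes "antichain_lattice L"
    and "generic A"
    and "lattice_finite L A"
  shows "\<exists>t0>1. \<forall>t\<ge>t0. \<forall>\<sigma>\<in>NA A.
           (convex hull (Et t ` \<sigma>)) face_of (Pt t A) \<and> inj_on (Et t) \<sigma> \<and>
           \<sigma> \<in> hull_t t A"
proof -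
  have "1 < 4 * real CARD('n) + 2" by simp
  then show ?thesis
    using strongly_neighborly_face[OF \<open>generic A\<close>] by blast
qed

end
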